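(* Let $\Sigma$ be a wind Riemannian structure on $M$ with conic Finsler metric $F$, and let $H$ be a Finsler metric on $M$ such that $H(v)\le F(v)$ for all $v\in A$. If $H$ is forward (resp. backward) complete, then $\Sigma$ is forward (resp. backward) geodesically complete, i.e., its extended conic Finsler metric $\bar F$ is forward (resp. backward) complete in the equivalent senses: $(M,d_{\bar F})$ is forward (resp. backward) Cauchy complete, equivalently every inextendible $\bar F$-geodesic has domain unbounded above (resp. below).
   Context: Let $M$ be a connected smooth manifold with Zermelo data $(g_R,W)$; the WRS is $\Sigma\subset TM$, $\Sigma_p=\{v:g_R(v-W_p,v-W_p)=1\}$. Put $g_0=g_R$, $\omega=-g_R(W,\cdot)$, $\Lambda=1-g_R(W,W)$, $h=\Lambda g_0+\omega\otimes\omega$. For $p\in M$: $A_p=T_pM\setminus\{0\}$ if $\Lambda(p)>0$; $\{v:\omega(v)<0\}$ if $\Lambda(p)=0$; $\{v:\omega(v)<0,h(v,v)>0\}$ if $\Lambda(p)<0$; $(A_E)_p=\emptyset$, $\{0_p\}$, $\{v:\omega(v)<0,h(v,v)\ge0\}$ respectively. $F(v)=g_0(v,v)/(-\omega(v)+\sqrt{\Lambda g_0(v,v)+\omega(v)^2})$ on $A$; $\bar F$ is the same formula on $A\cup A_E$ with $\bar F(0_p)=1$ when $\Lambda(p)=0$. Wind curves: piecewise smooth $\gamma$ with $\gamma'\in A\cup A_E$ and $g_R(\gamma'-W,\gamma'-W)\le1$; $d_{\bar F}(p,q)=\inf\int\bar F(\gamma')$ over wind curves from $p$ to $q$ ($+\infty$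 if none); forward (backward) Cauchy: for all $\varepsilon>0$ there is $N$ with $d_{\bar F}(x_i,x_j)<\varepsilon$ for $N<i<j$ (resp. $N<j<i$); Cauchy complete: all such sequences converge in $M$. $\bar F$-geodesics: curves $\gamma$ which, after positive affine reparametrization, make $t\mapsto(t,\gamma(t))$ a future-directed lightlike pregeodesic of $g=-\Lambda{\rm d}t^2+\omega\otimes{\rm d}t+{\rm d}t\otimes\omega+g_0$ on $\mathbb R\times M$ with $g(\rho',\partial_t)\le0$ along its affine parametrization $\rho$. A Finsler metric $H$ is forward (backward) complete if its (non-symmetric) distance $d_H$ is forward (backward) Cauchy complete. *)

theory Defs
  imports "HOL-Analysis.Analysis"
begin

fun Ck_on :: "nat \<Rightarrow> 'a::real_normed_vector set \<Rightarrow> ('a \<Rightarrow> 'b::real_normed_vector) \<Rightarrow> bool" where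
  "Ck_on 0 S f = continuous_on S f"
| "Ck_on (Suc k) S f =
     (\<exists>f'. (\<forall>x\<in>S. (f has_derivative f' x) (at x)) \<and> (\<forall>v. Ck_on k S (\<lambda>x. f' x v)))"

definition cinf_on :: "'a::real_normed_vector set \<Rightarrow> ('a \<Rightarrow> 'b::real_normed_vector) \<Rightarrow> bool" where
  "cinf_on S f \<longleftrightarrow> open S \<and> (\<forall>k. Ck_on k S f)"

definition smooth_set :: "'a::real_normed_vector set \<Rightarrow> ('a \<Rightarrow> 'b::real_normed_vector) \<Rightarrow> bool" where
  "smooth_set S f \<longleftrightarrow>
     (\<forall>x\<in>S. \<exists>U g. open U \<and> x \<in> U \<and> cinf_on U g \<and> (\<forall>y\<in>S \<inter> U. f y = g y))"

definition submanifold :: "'a::euclidean_space set \<Rightarrow> bool" where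
  "submanifold M \<longleftrightarrow>
     (\<forall>p\<in>M. \<exists>U V (\<phi>::'a\<Rightarrow>'a) \<psi> L. open U \<and> p \<in> U \<and> open V \<and> subspace L \<and>
        cinf_on U \<phi> \<and> cinf_on V \<psi> \<and> \<phi> ` U = V \<and> (\<forall>x\<in>U. \<psi> (\<phi> x) = x) \<and>
        \<phi> ` (M \<inter> U) = V \<inter> L)"

definition tangent_space :: "'a::euclidean_space set \<Rightarrow> 'a \<Rightarrow> 'a set" where
  "tangent_space M p =
     {v. \<exists>\<gamma> e. e > 0 \<and> (\<forall>t\<in>{-e<..<e}. \<gamma> t \<in> M) \<and> \<gamma> 0 = p \<and>
          (\<gamma> has_vector_derivative v) (at 0)}"

definition riemannian_metric :: "'a::euclidean_space set \<Rightarrow> ('a \<Rightarrow> 'a \<Rightarrow> 'a \<Rightarrow> real) \<Rightarrow> bool" where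
  "riemannian_metric M g \<longleftrightarrow>
     (\<forall>p\<in>M. bilinear (g p) \<and> (\<forall>v w. g p v w = g p w v) \<and>
        (\<forall>v\<in>tangent_space M p. v \<noteq> 0 \<longrightarrow> g p v v > 0)) \<and>
     (\<forall>v w. smooth_set M (\<lambda>p. g p v w))"

definition vector_field :: "'a::euclidean_space set \<Rightarrow> ('a \<Rightarrow> 'a) \<Rightarrow> bool" where
  "vector_field M W \<longleftrightarrow> (\<forall>p\<in>M. W p \<in> tangent_space M p) \<and> smooth_set M W"

definition tangent_bundle :: "'a::euclidean_space set \<Rightarrow> ('a \<times> 'a) set" where
  "tangent_bundle M = {(p, v). p \<in> M \<and> v \<in> tangent_space M p}"

text \<open>Finsler metric: continuous on TM, smooth off the zero section, positive,
  positively homogeneous, with positive definite fundamental tensor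
  g_v(u,u) = 1/2 d^2/dt^2 H(v+tu)^2 at t = 0.\<close>
definition finsler_metric :: "'a::euclidean_space set \<Rightarrow> ('a \<Rightarrow> 'a \<Rightarrow> real) \<Rightarrow> bool" where
  "finsler_metric M H \<longleftrightarrow>
     continuous_on (tangent_bundle M) (\<lambda>(p, v). H p v) \<and>
     smooth_set {(p, v). (p, v) \<in> tangent_bundle M \<and> v \<noteq> 0} (\<lambda>(p, v). H p v) \<and>
     (\<forall>p\<in>M. \<forall>v\<in>tangent_space M p.
        H p v \<ge> 0 \<and> (H p v = 0 \<longleftrightarrow> v = 0) \<and>
        (\<forall>c>0. H p (c *\<^sub>R v) = c * H p v) \<and>
        (v \<noteq> 0 \<longrightarrow> (\<forall>u\<in>tangent_space M p. u \<noteq> 0 \<longrightarrow>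
            (\<exists>d>0. ((deriv (\<lambda>t. (H p (v + t *\<^sub>R u))\<^sup>2)) has_real_derivative d) (at 0)))))"

definition wind_omega :: "('a \<Rightarrow> 'a \<Rightarrow> 'a \<Rightarrow> real) \<Rightarrow> ('a \<Rightarrow> 'a) \<Rightarrow> 'a \<Rightarrow> 'a \<Rightarrow> real" where
  "wind_omega gR W p v = - gR p (W p) v"

definition wind_Lambda :: "('a \<Rightarrow> 'a \<Rightarrow> 'a \<Rightarrow> real) \<Rightarrow> ('a \<Rightarrow> 'a) \<Rightarrow> 'a \<Rightarrow> real" where
  "wind_Lambda gR W p = 1 - gR p (W p) (W p)"

definition wind_h :: "('a \<Rightarrow> 'a \<Rightarrow> 'a \<Rightarrow> real) \<Rightarrow> ('a \<Rightarrow> 'a) \<Rightarrow> 'a \<Rightarrow> 'a \<Rightarrow> 'a \<Rightarrow> real" where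
  "wind_h gR W p v w = wind_Lambda gR W p * gR p v w + wind_omega gR W p v * wind_omega gR W p w"

definition wind_A :: "'a::euclidean_space set \<Rightarrow> ('a \<Rightarrow> 'a \<Rightarrow> 'a \<Rightarrow> real) \<Rightarrow> ('a \<Rightarrow> 'a) \<Rightarrow> 'a \<Rightarrow> 'a set" where
  "wind_A M gR W p =
     (if wind_Lambda gR W p > 0 then {v \<in> tangent_space M p. v \<noteq> 0}
      else if wind_Lambda gR W p = 0 then {v \<in> tangent_space M p. wind_omega gR W p v < 0}
      else {v \<in> tangent_space M p. wind_omega gR W p v < 0 \<and> wind_h gR W p v v > 0})"

definition wind_AE :: "'a::euclidean_space set \<Rightarrow> ('a \<Rightarrow> 'a \<Rightarrow> 'a \<Rightarrow> real) \<Rightarrow> ('a \<Rightarrow> 'a) \<Rightarrow> 'a \<Rightarrow> 'a set" where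
  "wind_AE M gR W p =
     (if wind_Lambda gR W p > 0 then {}
      else if wind_Lambda gR W p = 0 then {0}
      else {v \<in> tangent_space M p. wind_omega gR W p v < 0 \<and> wind_h gR W p v v \<ge> 0})"

definition wind_F :: "('a \<Rightarrow> 'a \<Rightarrow> 'a \<Rightarrow> real) \<Rightarrow> ('a \<Rightarrow> 'a) \<Rightarrow> 'a \<Rightarrow> 'a \<Rightarrow> real" where
  "wind_F gR W p v =
     gR p v v / (- wind_omega gR W p v +
                 sqrt (wind_Lambda gR W p * gR p v v + (wind_omega gR W p v)\<^sup>2))"

definition wind_Fbar :: "('a::zero \<Rightarrow> 'a \<Rightarrow> 'a \<Rightarrow> real) \<Rightarrow> ('a \<Rightarrow> 'a) \<Rightarrow> 'a \<Rightarrow> 'a \<Rightarrow> real" where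
  "wind_Fbar gR W p v = (if wind_Lambda gR W p = 0 \<and> v = 0 then 1 else wind_F gR W p v)"

definition pw_smooth_curve ::
  "'a::euclidean_space set \<Rightarrow> ('a \<Rightarrow> 'a \<Rightarrow> bool) \<Rightarrow> (real \<Rightarrow> 'a) \<Rightarrow> real \<Rightarrow> real \<Rightarrow> bool" where
  "pw_smooth_curve M P \<gamma> a b \<longleftrightarrow>
     a \<le> b \<and> (\<forall>t\<in>{a..b}. \<gamma> t \<in> M) \<and>
     (\<exists>ts::real list. ts \<noteq> [] \<and> hd ts = a \<and> last ts = b \<and> sorted_wrt (<) ts \<and>
        (\<forall>i < length ts - 1.
           smooth_set {ts!i..ts!(Suc i)} \<gamma> \<and>
           (\<forall>t\<in>{ts!i..ts!(Suc i)}. \<exists>v. (\<gamma> has_vector_derivative v) (at t within {ts!i..ts!(Suc i)})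
                \<and> P (\<gamma> t) v)))"

text \<open>Length-type distance: infimum of integral of L(gamma') over admissible curves
  from p to q (ennreal-valued; +infinity if there is none).\<close>
definition curve_dist ::
  "'a::euclidean_space set \<Rightarrow> ('a \<Rightarrow> 'a \<Rightarrow> bool) \<Rightarrow> ('a \<Rightarrow> 'a \<Rightarrow> real) \<Rightarrow> 'a \<Rightarrow> 'a \<Rightarrow> ennreal" where
  "curve_dist M P L p q =
     (INF \<gamma>ab \<in> {(\<gamma>, a, b). pw_smooth_curve M P \<gamma> a b \<and> \<gamma> a = p \<and> \<gamma> b = q}.
        (case \<gamma>ab of (\<gamma>, a, b) \<Rightarrow>
           \<integral>\<^sup>+ t\<in>{a..b}. ennreal (L (\<gamma> t) (vector_derivative \<gamma> (at t))) \<partial>lborel))"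

definition finsler_dist :: "'a::euclidean_space set \<Rightarrow> ('a \<Rightarrow> 'a \<Rightarrow> real) \<Rightarrow> 'a \<Rightarrow> 'a \<Rightarrow> ennreal" where
  "finsler_dist M H = curve_dist M (\<lambda>p v. v \<in> tangent_space M p) H"

definition wind_dist ::
  "'a::euclidean_space set \<Rightarrow> ('a \<Rightarrow> 'a \<Rightarrow> 'a \<Rightarrow> real) \<Rightarrow> ('a \<Rightarrow> 'a) \<Rightarrow> 'a \<Rightarrow> 'a \<Rightarrow> ennreal" where
  "wind_dist M gR W = curve_dist M
     (\<lambda>p v. v \<in> wind_A M gR W p \<union> wind_AE M gR W p \<and> gR p (v - W p) (v - W p) \<le> 1)
     (wind_Fbar gR W)"

definition forward_cauchy :: "('a \<Rightarrow> 'a \<Rightarrow> ennreal) \<Rightarrow> (nat \<Rightarrow> 'a) \<Rightarrow> bool" where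
  "forward_cauchy d x \<longleftrightarrow> (\<forall>\<epsilon>>0. \<exists>N. \<forall>i j. N < i \<and> i < j \<longrightarrow> d (x i) (x j) < ennreal \<epsilon>)"

definition backward_cauchy :: "('a \<Rightarrow> 'a \<Rightarrow> ennreal) \<Rightarrow> (nat \<Rightarrow> 'a) \<Rightarrow> bool" where
  "backward_cauchy d x \<longleftrightarrow> (\<forall>\<epsilon>>0. \<exists>N. \<forall>i j. N < j \<and> j < i \<longrightarrow> d (x i) (x j) < ennreal \<epsilon>)"

definition forward_complete :: "'a::topological_space set \<Rightarrow> ('a \<Rightarrow> 'a \<Rightarrow> ennreal) \<Rightarrow> bool" where
  "forward_complete M d \<longleftrightarrow>
     (\<forall>x. (\<forall>i. x i \<in> M) \<and> forward_cauchy d x \<longrightarrow> (\<exists>y\<in>M. x \<longlonglongrightarrow> y))"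

definition backward_complete :: "'a::topological_space set \<Rightarrow> ('a \<Rightarrow> 'a \<Rightarrow> ennreal) \<Rightarrow> bool" where
  "backward_complete M d \<longleftrightarrow>
     (\<forall>x. (\<forall>i. x i \<in> M) \<and> backward_cauchy d x \<longrightarrow> (\<exists>y\<in>M. x \<longlonglongrightarrow> y))"

end

(*
  H <= F-bar holds on all of A and A_E: on A it is the hypothesis; for Lambda = 0 the only
  vector of A_E is 0, where F-bar = 1 > 0 = H; for Lambda < 0 a vector v of A_E is the limit
  of v + sW (s > 0), which lies in A because h(v + sW, v + sW) = h(v, v) - 2s omega(v)
  + s^2 g_R(W, W) > 0, and H v <= F v follows by continuity of H and F. Hence every wind curve
  is admissible for H with no larger H-length, so d_H <= d_F-bar, and Cauchy sequences of
  d_F-bar are Cauchy sequences of d_H, which converge by completeness of H.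
*)

theory Submission
  imports Defs
begin

lemma cinf_on_has_derivative:
  assumes "cinf_on U f"
  obtains f' where "\<And>x. x \<in> U \<Longrightarrow> (f has_derivative f' x) (at x)"
proof -
  have "Ck_on (Suc 0) U f" using assms unfolding cinf_on_def by blast
  then show ?thesis using that by auto
qed

lemma has_vector_derivative_in_closed_subspace:
  fixes f :: "real \<Rightarrow> 'a::real_normed_vector"
  assumes f': "(f has_vector_derivative v) (at x)"
    and ev: "\<forall>\<^sub>F t in at x. f t \<in> L" and fx: "f x \<in> L"
    and L: "subspace L" "closed L"
  shows "v \<in> L"
proof -
  have "((\<lambda>y. (1 / norm (y - x)) *\<^sub>R (f y - (f x + (y - x) *\<^sub>R v))) \<longlongrightarrow> 0) (at_right x)"
    using f' unfolding has_vector_derivative_def has_derivative_within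
    by (auto intro: tendsto_mono[OF at_le])
  moreover have "\<forall>\<^sub>F y in at_right x.
      (1 / norm (y - x)) *\<^sub>R (f y - (f x + (y - x) *\<^sub>R v)) = (f y - f x) /\<^sub>R (y - x) - v"
    by (rule eventually_at_rightI[of x "x + 1"])
      (simp_all add: scaleR_diff_right scaleR_add_right divide_inverse_commute)
  ultimately have "((\<lambda>y. (f y - f x) /\<^sub>R (y - x) - v) \<longlongrightarrow> 0) (at_right x)"
    by (rule tendsto_cong[THEN iffD1, rotated])
  then have quotient: "((\<lambda>y. (f y - f x) /\<^sub>R (y - x)) \<longlongrightarrow> v) (at_right x)"
    by (simp add: Lim_null[symmetric])
  have "\<forall>\<^sub>F y in at_right x. f y \<in> L"
    using ev by (rule filter_leD[OF at_le, rotated]) simp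
  then have "\<forall>\<^sub>F y in at_right x. (f y - f x) /\<^sub>R (y - x) \<in> L"
    by eventually_elim (use L fx in \<open>simp add: subspace_diff subspace_scale\<close>)
  then show ?thesis
    using Lim_in_closed_set[OF L(2) _ _ quotient] by simp
qed

lemma zero_in_tangent_space:
  assumes "p \<in> M"
  shows "0 \<in> tangent_space M p"
  unfolding tangent_space_def
  using assms by (intro CollectI exI[of _ "\<lambda>_. p"] exI[of _ 1]) (auto intro: derivative_intros)

lemma derivative_image_subset_tangent_space:
  fixes \<psi> :: "'b::real_normed_vector \<Rightarrow> 'a::euclidean_space"
  assumes "open V" "subspace L" and q: "q \<in> V \<inter> L"
    and \<psi>M: "\<forall>y\<in>V \<inter> L. \<psi> y \<in> M" and \<psi>': "(\<psi> has_derivative D) (at q)"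
  shows "D ` L \<subseteq> tangent_space M (\<psi> q)"
proof
  fix u assume "u \<in> D ` L"
  then obtain w where w: "w \<in> L" "u = D w" by blast
  have "((\<lambda>t. q + t *\<^sub>R w) \<longlongrightarrow> q) (nhds 0)"
    by (auto intro!: tendsto_eq_intros filterlim_ident)
  then have "\<forall>\<^sub>F t in nhds 0. q + t *\<^sub>R w \<in> V"
    using \<open>open V\<close> q by (auto intro: topological_tendstoD)
  then obtain e where e: "e > 0" "\<And>t. dist t 0 < e \<Longrightarrow> q + t *\<^sub>R w \<in> V"
    unfolding eventually_nhds_metric by blast
  have "\<psi> (q + t *\<^sub>R w) \<in> M" if "t \<in> {-e<..<e}" for t
    using that e(2)[of t] \<psi>M q w \<open>subspace L\<close> by (auto simp: subspace_add subspace_scale)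
  moreover have "((\<psi> \<circ> (\<lambda>t. q + t *\<^sub>R w)) has_vector_derivative D w) (at 0)"
    by (rule vector_derivative_diff_chain_within)
      (auto intro!: derivative_eq_intros has_derivative_at_withinI \<psi>')
  ultimately show "u \<in> tangent_space M (\<psi> q)"
    unfolding tangent_space_def w(2) using e(1) by (intro CollectI exI conjI) (auto simp: o_def)
qed

lemma tangent_space_subset_derivative_image:
  fixes \<phi> :: "'a::euclidean_space \<Rightarrow> 'b::euclidean_space"
  assumes U: "open U" "p \<in> U" and L: "subspace L" and chart: "\<phi> ` (M \<inter> U) \<subseteq> L"
    and \<phi>': "(\<phi> has_derivative \<phi>') (at p)" and \<psi>': "(\<psi> has_derivative D) (at (\<phi> p))"
    and inverse: "\<forall>x\<in>U. \<psi> (\<phi> x) = x"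
  shows "tangent_space M p \<subseteq> D ` L"
proof
  fix v assume "v \<in> tangent_space M p"
  then obtain \<gamma> e where e: "e > 0" and \<gamma>M: "\<forall>t\<in>{-e<..<e}. \<gamma> t \<in> M" and \<gamma>0: "\<gamma> 0 = p"
    and \<gamma>': "(\<gamma> has_vector_derivative v) (at 0)"
    unfolding tangent_space_def by blast
  have "(\<gamma> \<longlongrightarrow> p) (at 0)"
    using has_vector_derivative_continuous[OF \<gamma>'] \<gamma>0 by (simp add: continuous_at)
  then have "\<forall>\<^sub>F t in at 0. \<gamma> t \<in> U"
    using U by (rule topological_tendstoD)
  moreover have "\<forall>\<^sub>F t in at 0. \<gamma> t \<in> M"
    unfolding eventually_at using e \<gamma>M by (intro exI[of _ e]) (auto simp: dist_norm abs_less_iff)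
  ultimately have "\<forall>\<^sub>F t in at 0. (\<phi> \<circ> \<gamma>) t \<in> L"
    by eventually_elim (use chart in auto)
  moreover have "((\<phi> \<circ> \<gamma>) has_vector_derivative \<phi>' v) (at 0)"
    using \<gamma>' by (rule vector_derivative_diff_chain_within) (simp add: \<gamma>0 has_derivative_at_withinI \<phi>')
  moreover have "(\<phi> \<circ> \<gamma>) 0 \<in> L"
    using chart U \<gamma>M e \<gamma>0 by force
  ultimately have \<phi>'v: "\<phi>' v \<in> L"
    using has_vector_derivative_in_closed_subspace L closed_subspace by blast
  have "((\<psi> \<circ> \<phi>) has_derivative D \<circ> \<phi>') (at p)"
    using \<phi>' \<psi>' by (rule diff_chain_at)
  moreover have "((\<psi> \<circ> \<phi>) has_derivative id) (at p)"
    by (rule has_derivative_transform_within_open[OF has_derivative_id U]) (simp add: inverse)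
  ultimately have "D \<circ> \<phi>' = id"
    by (rule has_derivative_unique)
  then have "v = D (\<phi>' v)"
    by (metis comp_apply id_apply)
  then show "v \<in> D ` L"
    using \<phi>'v by blast
qed

lemma subspace_tangent_space:
  assumes "submanifold M" "p \<in> M"
  shows "subspace (tangent_space M p)"
proof -
  obtain U V L and \<phi> \<psi> :: "'a \<Rightarrow> 'a" where U: "open U" "p \<in> U" and V: "open V"
    and L: "subspace L" and smooth: "cinf_on U \<phi>" "cinf_on V \<psi>" and "\<phi> ` U = V"
    and inverse: "\<forall>x\<in>U. \<psi> (\<phi> x) = x" and chart: "\<phi> ` (M \<inter> U) = V \<inter> L"
    using assms unfolding submanifold_def by metis
  obtain \<phi>' where \<phi>': "\<And>x. x \<in> U \<Longrightarrow> (\<phi> has_derivative \<phi>' x) (at x)"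
    using cinf_on_has_derivative[OF smooth(1)] by blast
  obtain \<psi>' where \<psi>': "\<And>y. y \<in> V \<Longrightarrow> (\<psi> has_derivative \<psi>' y) (at y)"
    using cinf_on_has_derivative[OF smooth(2)] by blast
  have \<phi>p: "\<phi> p \<in> V \<inter> L"
    using chart assms(2) U by blast
  have \<psi>'p: "(\<psi> has_derivative \<psi>' (\<phi> p)) (at (\<phi> p))"
    using \<psi>' \<phi>p by blast
  have "\<forall>y\<in>V \<inter> L. \<psi> y \<in> M"
    using chart inverse by force
  then have "\<psi>' (\<phi> p) ` L \<subseteq> tangent_space M (\<psi> (\<phi> p))"
    by (rule derivative_image_subset_tangent_space[OF V L \<phi>p _ \<psi>'p])
  moreover have "tangent_space M p \<subseteq> \<psi>' (\<phi> p) ` L"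
    by (rule tangent_space_subset_derivative_image[OF U L _ \<phi>'[OF U(2)] \<psi>'p inverse])
      (use chart in blast)
  ultimately have "tangent_space M p = \<psi>' (\<phi> p) ` L"
    using inverse U by auto
  then show ?thesis
    using linear_subspace_image[OF has_derivative_linear[OF \<psi>'p] L] by simp
qed

lemma wind_omega_add_scaleR_wind:
  assumes "bilinear (gR p)"
  shows "wind_omega gR W p (v + s *\<^sub>R W p) = wind_omega gR W p v - s * gR p (W p) (W p)"
  using assms by (simp add: wind_omega_def bilinear_radd bilinear_rmul)

lemma wind_h_add_scaleR_wind:
  assumes "bilinear (gR p)" and "gR p v (W p) = gR p (W p) v"
  shows "wind_h gR W p (v + s *\<^sub>R W p) (v + s *\<^sub>R W p) =
    wind_h gR W p v v - 2 * s * wind_omega gR W p v + s\<^sup>2 * gR p (W p) (W p)"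
proof -
  have "gR p (v + s *\<^sub>R W p) (v + s *\<^sub>R W p) =
      gR p v v + 2 * s * gR p (W p) v + s\<^sup>2 * gR p (W p) (W p)"
    using assms by (simp add: bilinear_ladd bilinear_radd bilinear_lmul bilinear_rmul power2_eq_square)
  then show ?thesis
    unfolding wind_h_def wind_omega_add_scaleR_wind[of gR p, OF assms(1)]
    by (simp add: wind_Lambda_def wind_omega_def power2_eq_square algebra_simps)
qed

lemma wind_F_eq_sqrt_wind_h:
  "wind_F gR W p v = gR p v v / (- wind_omega gR W p v + sqrt (wind_h gR W p v v))"
  by (simp add: wind_F_def wind_h_def power2_eq_square)

lemma isCont_wind_F:
  fixes gR :: "'a::euclidean_space \<Rightarrow> 'a \<Rightarrow> 'a \<Rightarrow> real"
  assumes "bilinear (gR p)" and "- wind_omega gR W p v + sqrt (wind_h gR W p v v) \<noteq> 0"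
  shows "isCont (wind_F gR W p) v"
proof -
  have "isCont (\<lambda>u. gR p x u) v" "isCont (\<lambda>u. gR p u u) v" for x
    using bilinear_continuous_compose[OF continuous_const continuous_ident assms(1)]
      bilinear_continuous_compose[OF continuous_ident continuous_ident assms(1)] by auto
  then show ?thesis
    using assms(2) unfolding wind_F_eq_sqrt_wind_h[abs_def] wind_h_def wind_omega_def
    by (intro continuous_intros) auto
qed

lemma finsler_metric_continuous_on_tangent_space:
  assumes "finsler_metric M H" "p \<in> M"
  shows "continuous_on (tangent_space M p) (H p)"
proof -
  have "continuous_on (tangent_bundle M) (\<lambda>(p, v). H p v)"
    using assms(1) unfolding finsler_metric_def by blast
  then have "continuous_on (tangent_space M p) (\<lambda>v. (\<lambda>(p, v). H p v) (p, v))"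
    by (rule continuous_on_compose2) (auto intro: continuous_intros simp: tangent_bundle_def assms(2))
  then show ?thesis
    by simp
qed

lemma wind_A_union_wind_AE_subset_tangent_space:
  assumes "p \<in> M"
  shows "wind_A M gR W p \<union> wind_AE M gR W p \<subseteq> tangent_space M p"
  using zero_in_tangent_space[OF assms] by (auto simp: wind_A_def wind_AE_def)

lemma finsler_le_wind_F_on_wind_AE:
  fixes M :: "'a::euclidean_space set"
  assumes "submanifold M" "riemannian_metric M gR" "vector_field M W" "finsler_metric M H"
    and le_on_A: "\<forall>u\<in>wind_A M gR W p. H p u \<le> wind_F gR W p u"
    and p: "p \<in> M" and \<Lambda>: "wind_Lambda gR W p < 0" and v: "v \<in> wind_AE M gR W p"
  shows "H p v \<le> wind_F gR W p v"
proof -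
  let ?T = "tangent_space M p" and ?ray = "\<lambda>s. v + s *\<^sub>R W p"
  have T: "subspace ?T"
    using assms(1) p by (rule subspace_tangent_space)
  have bilinear: "bilinear (gR p)" and symmetric: "gR p v (W p) = gR p (W p) v"
    using assms(2) p unfolding riemannian_metric_def by blast+
  have vT: "v \<in> ?T" and \<omega>: "wind_omega gR W p v < 0" and h: "wind_h gR W p v v \<ge> 0"
    using v \<Lambda> unfolding wind_AE_def by auto
  have ray_T: "?ray s \<in> ?T" for s
    using assms(3) p T vT by (simp add: vector_field_def subspace_add subspace_scale)
  have W2: "gR p (W p) (W p) > 1"
    using \<Lambda> by (simp add: wind_Lambda_def)
  have "?ray s \<in> wind_A M gR W p" if "s > 0" for s
  proof -
    have "s * wind_omega gR W p v < 0" "s * gR p (W p) (W p) > 0" "s\<^sup>2 * gR p (W p) (W p) > 0"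
      using \<omega> W2 that by (simp_all add: mult_pos_neg)
    then have "wind_omega gR W p (?ray s) < 0" "wind_h gR W p (?ray s) (?ray s) > 0"
      using \<omega> h
      unfolding wind_omega_add_scaleR_wind[of gR p, OF bilinear]
        wind_h_add_scaleR_wind[of gR p v W, OF bilinear symmetric]
      by linarith+
    then show ?thesis
      using \<Lambda> ray_T by (simp add: wind_A_def)
  qed
  then have le: "\<forall>\<^sub>F s in at_right 0. H p (?ray s) \<le> wind_F gR W p (?ray s)"
    using le_on_A by (auto intro: eventually_at_rightI[of 0 1])
  have "- wind_omega gR W p v + sqrt (wind_h gR W p v v) > 0"
    using \<omega> real_sqrt_ge_zero[OF h] by linarith
  then have "isCont (\<lambda>s. wind_F gR W p (?ray s)) 0"
    by (intro isCont_o2[OF _ isCont_wind_F[of gR p, OF bilinear]] continuous_intros) auto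
  then have lim_F: "((\<lambda>s. wind_F gR W p (?ray s)) \<longlongrightarrow> wind_F gR W p v) (at_right 0)"
    by (auto simp: isCont_def intro: tendsto_mono[OF at_le])
  have H_cont: "continuous_on ?T (H p)"
    using assms(4) p by (rule finsler_metric_continuous_on_tangent_space)
  have "continuous_on UNIV (\<lambda>s. H p (?ray s))"
    using ray_T by (intro continuous_on_compose2[OF H_cont]) (auto intro!: continuous_intros)
  then have "isCont (\<lambda>s. H p (?ray s)) 0"
    by (simp add: continuous_on_eq_continuous_at)
  then have lim_H: "((\<lambda>s. H p (?ray s)) \<longlongrightarrow> H p v) (at_right 0)"
    by (auto simp: isCont_def intro: tendsto_mono[OF at_le])
  show ?thesis
    using tendsto_le[OF _ lim_F lim_H le] by simp
qed

lemma sorted_wrt_less_nth_in_hd_last: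
  fixes ts :: "'a::linorder list"
  assumes "sorted_wrt (<) ts" "i < length ts"
  shows "ts ! i \<in> {hd ts..last ts}"
proof -
  have "ts \<noteq> []"
    using assms(2) by auto
  then show ?thesis
    using sorted_nth_mono[OF strict_sorted_imp_sorted[OF assms(1)]] assms(2)
    by (simp add: hd_conv_nth last_conv_nth)
qed

lemma sorted_wrt_less_between_consecutive:
  fixes ts :: "'a::linorder list"
  assumes "sorted_wrt (<) ts" "ts \<noteq> []" "hd ts \<le> t" "t \<le> last ts" "t \<notin> set ts"
  shows "\<exists>i < length ts - 1. ts ! i < t \<and> t < ts ! Suc i"
  using assms
proof (induction ts)
  case Nil
  then show ?case by simp
next
  case (Cons x xs)
  show ?case
  proof (cases xs)
    case Nil
    then show ?thesis using Cons.prems by simp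
  next
    case (Cons y ys)
    show ?thesis
    proof (cases "t < y")
      case True
      have "x < t" using Cons.prems by (auto simp: order_le_less)
      then show ?thesis using True \<open>xs = y # ys\<close> by (intro exI[of _ 0]) simp
    next
      case False
      then have "\<exists>i < length xs - 1. xs ! i < t \<and> t < xs ! Suc i"
        using Cons.prems \<open>xs = y # ys\<close> by (intro Cons.IH) auto
      then obtain i where "i < length xs - 1" "xs ! i < t" "t < xs ! Suc i" by blast
      then show ?thesis using \<open>xs = y # ys\<close> by (intro exI[of _ "Suc i"]) auto
    qed
  qed
qed

lemma pw_smooth_curve_mono:
  assumes "pw_smooth_curve M P \<gamma> a b" and "\<forall>p\<in>M. \<forall>v. P p v \<longrightarrow> Q p v"
  shows "pw_smooth_curve M Q \<gamma> a b"
proof -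
  obtain ts :: "real list" where ts: "ts \<noteq> []" "hd ts = a" "last ts = b" "sorted_wrt (<) ts"
    and pieces: "\<forall>i < length ts - 1. smooth_set {ts!i..ts!(Suc i)} \<gamma> \<and>
      (\<forall>t\<in>{ts!i..ts!(Suc i)}. \<exists>v. (\<gamma> has_vector_derivative v) (at t within {ts!i..ts!(Suc i)})
         \<and> P (\<gamma> t) v)"
    using assms(1) unfolding pw_smooth_curve_def by blast
  have "\<gamma> t \<in> M" if "i < length ts - 1" "t \<in> {ts!i..ts!(Suc i)}" for i t
  proof -
    have "a \<le> ts ! i" "ts ! Suc i \<le> b"
      using that(1) sorted_wrt_less_nth_in_hd_last[OF ts(4), of i]
        sorted_wrt_less_nth_in_hd_last[OF ts(4), of "Suc i"] ts(2,3) by auto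
    then show ?thesis
      using that(2) assms(1) unfolding pw_smooth_curve_def by auto
  qed
  then have "\<forall>i < length ts - 1. smooth_set {ts!i..ts!(Suc i)} \<gamma> \<and>
      (\<forall>t\<in>{ts!i..ts!(Suc i)}. \<exists>v. (\<gamma> has_vector_derivative v) (at t within {ts!i..ts!(Suc i)})
         \<and> Q (\<gamma> t) v)"
    using pieces assms(2) by metis
  then show ?thesis
    using assms(1) ts unfolding pw_smooth_curve_def by blast
qed

lemma pw_smooth_curve_AE_velocity:
  assumes "pw_smooth_curve M P \<gamma> a b"
  shows "AE t in lborel. t \<in> {a..b} \<longrightarrow> P (\<gamma> t) (vector_derivative \<gamma> (at t))"
proof -
  obtain ts :: "real list" where ts: "ts \<noteq> []" "hd ts = a" "last ts = b" "sorted_wrt (<) ts"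
    and pieces: "\<forall>i < length ts - 1.
      \<forall>t\<in>{ts!i..ts!(Suc i)}. \<exists>v. (\<gamma> has_vector_derivative v) (at t within {ts!i..ts!(Suc i)})
         \<and> P (\<gamma> t) v"
    using assms unfolding pw_smooth_curve_def by blast
  have "AE t in lborel. t \<notin> set ts"
    by (rule AE_not_in[OF countable_imp_null_set_lborel]) (simp add: countable_finite)
  then show ?thesis
  proof eventually_elim
    case (elim t)
    show ?case
    proof
      assume "t \<in> {a..b}"
      then obtain i where i: "i < length ts - 1" and t: "ts ! i < t" "t < ts ! Suc i"
        using sorted_wrt_less_between_consecutive[OF ts(4,1)] ts elim by auto
      then obtain v where v: "(\<gamma> has_vector_derivative v) (at t within {ts!i..ts!(Suc i)})"
        and "P (\<gamma> t) v"
        using pieces by fastforce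
      moreover have "vector_derivative \<gamma> (at t) = v"
        using v at_within_Icc_at[OF t] by (simp add: vector_derivative_at)
      ultimately show "P (\<gamma> t) (vector_derivative \<gamma> (at t))"
        by simp
    qed
  qed
qed

lemma curve_dist_mono:
  assumes "\<forall>p\<in>M. \<forall>v. P p v \<longrightarrow> Q p v \<and> L\<^sub>1 p v \<le> L\<^sub>2 p v"
  shows "curve_dist M Q L\<^sub>1 p q \<le> curve_dist M P L\<^sub>2 p q"
  unfolding curve_dist_def
proof (rule INF_mono)
  fix m assume "m \<in> {(\<gamma>, a, b). pw_smooth_curve M P \<gamma> a b \<and> \<gamma> a = p \<and> \<gamma> b = q}"
  then obtain \<gamma> a b where m: "m = (\<gamma>, a, b)" and \<gamma>: "pw_smooth_curve M P \<gamma> a b"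
    and ends: "\<gamma> a = p" "\<gamma> b = q"
    by blast
  have "AE t in lborel. t \<in> {a..b} \<longrightarrow> \<gamma> t \<in> M \<and> P (\<gamma> t) (vector_derivative \<gamma> (at t))"
    using pw_smooth_curve_AE_velocity[OF \<gamma>] \<gamma> by (auto simp: pw_smooth_curve_def)
  then have "(\<integral>\<^sup>+ t\<in>{a..b}. ennreal (L\<^sub>1 (\<gamma> t) (vector_derivative \<gamma> (at t))) \<partial>lborel)
      \<le> (\<integral>\<^sup>+ t\<in>{a..b}. ennreal (L\<^sub>2 (\<gamma> t) (vector_derivative \<gamma> (at t))) \<partial>lborel)"
    using assms by (intro nn_integral_mono_AE)
      (auto elim!: eventually_mono split: split_indicator intro: ennreal_leI)
  moreover have "pw_smooth_curve M Q \<gamma> a b"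
    using \<gamma> assms by (blast intro: pw_smooth_curve_mono)
  ultimately show "\<exists>n\<in>{(\<gamma>, a, b). pw_smooth_curve M Q \<gamma> a b \<and> \<gamma> a = p \<and> \<gamma> b = q}.
      (case n of (\<gamma>, a, b) \<Rightarrow>
         \<integral>\<^sup>+ t\<in>{a..b}. ennreal (L\<^sub>1 (\<gamma> t) (vector_derivative \<gamma> (at t))) \<partial>lborel)
      \<le> (case m of (\<gamma>, a, b) \<Rightarrow>
         \<integral>\<^sup>+ t\<in>{a..b}. ennreal (L\<^sub>2 (\<gamma> t) (vector_derivative \<gamma> (at t))) \<partial>lborel)"
    using ends m by (intro bexI[of _ "(\<gamma>, a, b)"]) auto
qed

lemma finsler_le_wind_Fbar:
  fixes M :: "'a::euclidean_space set"
  assumes "submanifold M" "riemannian_metric M gR" "vector_field M W" "finsler_metric M H"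
    and le_on_A: "\<forall>u\<in>wind_A M gR W p. H p u \<le> wind_F gR W p u"
    and p: "p \<in> M" and v: "v \<in> wind_A M gR W p \<union> wind_AE M gR W p"
  shows "H p v \<le> wind_Fbar gR W p v"
proof (cases "v = 0")
  case True
  have "H p 0 = 0"
    using assms(4) p zero_in_tangent_space[OF p] unfolding finsler_metric_def by blast
  moreover have "gR p 0 0 = 0"
    using assms(2) p unfolding riemannian_metric_def by (blast intro: bilinear_lzero)
  ultimately show ?thesis
    using True by (simp add: wind_Fbar_def wind_F_def)
next
  case False
  have "H p v \<le> wind_F gR W p v"
  proof (cases "v \<in> wind_A M gR W p")
    case True
    then show ?thesis
      using le_on_A by blast
  next
    case False
    then have "wind_Lambda gR W p < 0" "v \<in> wind_AE M gR W p"
      using v \<open>v \<noteq> 0\<close> by (auto simp: wind_AE_def split: if_splits)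
    then show ?thesis
      by (rule finsler_le_wind_F_on_wind_AE[OF assms(1-4) le_on_A p])
  qed
  then show ?thesis
    using False by (simp add: wind_Fbar_def)
qed

lemma finsler_dist_le_wind_dist:
  fixes M :: "'a::euclidean_space set"
  assumes "submanifold M" "riemannian_metric M gR" "vector_field M W" "finsler_metric M H"
    and "\<forall>p\<in>M. \<forall>v\<in>wind_A M gR W p. H p v \<le> wind_F gR W p v"
  shows "finsler_dist M H p q \<le> wind_dist M gR W p q"
  unfolding finsler_dist_def wind_dist_def
  using wind_A_union_wind_AE_subset_tangent_space finsler_le_wind_Fbar[OF assms(1-4)] assms(5)
  by (intro curve_dist_mono) blast

lemma forward_complete_mono:
  assumes "\<And>x y. d x y \<le> d' x y" and "forward_complete M d"
  shows "forward_complete M d'"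
proof -
  have "forward_cauchy d x" if "forward_cauchy d' x" for x
    using that assms(1) unfolding forward_cauchy_def by (meson le_less_trans)
  then show ?thesis
    using assms(2) unfolding forward_complete_def by blast
qed

lemma backward_complete_mono:
  assumes "\<And>x y. d x y \<le> d' x y" and "backward_complete M d"
  shows "backward_complete M d'"
proof -
  have "backward_cauchy d x" if "backward_cauchy d' x" for x
    using that assms(1) unfolding backward_cauchy_def by (meson le_less_trans)
  then show ?thesis
    using assms(2) unfolding backward_complete_def by blast
qed

theorem proposition4p2:
  fixes M :: "'a::euclidean_space set"
    and gR :: "'a \<Rightarrow> 'a \<Rightarrow> 'a \<Rightarrow> real"
    and W :: "'a \<Rightarrow> 'a"
    and H :: "'a \<Rightarrow> 'a \<Rightarrow> real"
  assumes "submanifold M"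
    and "connected M"
    and "riemannian_metric M gR"
    and "vector_field M W"
    and "finsler_metric M H"
    and "\<forall>p\<in>M. \<forall>v\<in>wind_A M gR W p. H p v \<le> wind_F gR W p v"
  shows "(forward_complete M (finsler_dist M H) \<longrightarrow> forward_complete M (wind_dist M gR W)) \<and>
         (backward_complete M (finsler_dist M H) \<longrightarrow> backward_complete M (wind_dist M gR W))"
proof -
  have "finsler_dist M H p q \<le> wind_dist M gR W p q" for p q
    using finsler_dist_le_wind_dist[OF assms(1,3-6)] .
  then show ?thesis
    using forward_complete_mono backward_complete_mono by blast
qed

end
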